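(* Let $G=(V,E)$ be a simple undirected graph, let $E^2=\{\{u,v\}\in\binom{V}{2}:\operatorname{dist}_G(u,v)\le 2\}$, and let $b\ge 0$. Let $F_1$ be the set of $(x,y)\in\mathbb{Z}_+^{E^2}\times\{0,1\}^V$ satisfying (i) $1-y_u-y_v-y_i\le x_{uv}$ for all $\{u,v\}\in E^2\setminus E$ and all $i\in N_G(u)\cap N_G(v)$, (ii) $1-y_u-y_v\le x_{uv}$ for all $\{u,v\}\in E$, and (iii) $\sum_{v\in V}y_v\le b$; and let $F_2$ be the set of $(x,y)\in\mathbb{Z}_+^{E^2}\times\{0,1\}^V$ satisfying (ii), (iii) and (i') $\dfrac{\sum_{i\in N_G(u)\cap N_G(v)}(1-y_i)}{|N_G(u)\cap N_G(v)|}-y_u-y_v\le x_{uv}$ for all $\{u,v\}\in E^2\setminus E$. Then $F_1=F_2$; that is, in the 2-DCNDP formulation the constraints (i) can be replaced by the constraints (i').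
   Context: The 2-DCNDP (2-hop distance-based critical node detection problem) MIP minimizes $\sum_{e\in E^2}x_e$ subject to (i)–(iii), where $y_v=1$ means vertex $v$ is deleted and $x_{uv}=1$ indicates that $u,v$ remain connected by a path of length at most $2$. $N_G(v)$ is the neighbor set of $v$; for $\{u,v\}\in E^2\setminus E$, $N_G(u)\cap N_G(v)\neq\emptyset$. *)

theory Defs
  imports Complex_Main "HOL-Library.FuncSet"
begin

definition simple_graph :: "'a set \<Rightarrow> 'a set set \<Rightarrow> bool" where
  "simple_graph V E \<longleftrightarrow> finite V \<and> (\<forall>e\<in>E. \<exists>u v. e = {u, v} \<and> u \<noteq> v \<and> u \<in> V \<and> v \<in> V)"

definition nbhd :: "'a set \<Rightarrow> 'a set set \<Rightarrow> 'a \<Rightarrow> 'a set" where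
  "nbhd V E v = {u \<in> V. {u, v} \<in> E}"

definition E2 :: "'a set \<Rightarrow> 'a set set \<Rightarrow> 'a set set" where
  "E2 V E = {{u, v} | u v. u \<in> V \<and> v \<in> V \<and> u \<noteq> v \<and>
      ({u, v} \<in> E \<or> nbhd V E u \<inter> nbhd V E v \<noteq> {})}"

definition dom_ok :: "'a set \<Rightarrow> 'a set set \<Rightarrow> ('a set \<Rightarrow> int) \<Rightarrow> ('a \<Rightarrow> int) \<Rightarrow> bool" where
  "dom_ok V E x y \<longleftrightarrow> (\<forall>e\<in>E2 V E. x e \<ge> 0) \<and> (\<forall>v\<in>V. y v \<in> {0, 1})"

definition con_ii :: "'a set \<Rightarrow> 'a set set \<Rightarrow> ('a set \<Rightarrow> int) \<Rightarrow> ('a \<Rightarrow> int) \<Rightarrow> bool" where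
  "con_ii V E x y \<longleftrightarrow> (\<forall>u v. {u, v} \<in> E \<longrightarrow> 1 - y u - y v \<le> x {u, v})"

definition con_iii :: "'a set \<Rightarrow> ('a \<Rightarrow> int) \<Rightarrow> real \<Rightarrow> bool" where
  "con_iii V y b \<longleftrightarrow> real_of_int (\<Sum>v\<in>V. y v) \<le> b"

definition con_i :: "'a set \<Rightarrow> 'a set set \<Rightarrow> ('a set \<Rightarrow> int) \<Rightarrow> ('a \<Rightarrow> int) \<Rightarrow> bool" where
  "con_i V E x y \<longleftrightarrow> (\<forall>u v. {u, v} \<in> E2 V E - E \<longrightarrow>
      (\<forall>i \<in> nbhd V E u \<inter> nbhd V E v. 1 - y u - y v - y i \<le> x {u, v}))"

definition con_i' :: "'a set \<Rightarrow> 'a set set \<Rightarrow> ('a set \<Rightarrow> int) \<Rightarrow> ('a \<Rightarrow> int) \<Rightarrow> bool" where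
  "con_i' V E x y \<longleftrightarrow> (\<forall>u v. {u, v} \<in> E2 V E - E \<longrightarrow>
      (\<Sum>i \<in> nbhd V E u \<inter> nbhd V E v. real_of_int (1 - y i))
        / real (card (nbhd V E u \<inter> nbhd V E v)) - real_of_int (y u) - real_of_int (y v)
      \<le> real_of_int (x {u, v}))"

definition F1 :: "'a set \<Rightarrow> 'a set set \<Rightarrow> real \<Rightarrow> (('a set \<Rightarrow> int) \<times> ('a \<Rightarrow> int)) set" where
  "F1 V E b = {(x, y). x \<in> extensional (E2 V E) \<and> y \<in> extensional V \<and>
      dom_ok V E x y \<and> con_i V E x y \<and> con_ii V E x y \<and> con_iii V y b}"

definition F2 :: "'a set \<Rightarrow> 'a set set \<Rightarrow> real \<Rightarrow> (('a set \<Rightarrow> int) \<times> ('a \<Rightarrow> int)) set" where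
  "F2 V E b = {(x, y). x \<in> extensional (E2 V E) \<and> y \<in> extensional V \<and>
      dom_ok V E x y \<and> con_i' V E x y \<and> con_ii V E x y \<and> con_iii V y b}"

end

theory Submission
  imports Defs
begin

text \<open>Constraints (i) for a pair \<open>{u, v}\<close> say that the maximum of the 0/1 values \<open>1 - y i\<close> over the
  common neighbourhood is at most the integer \<open>x {u, v} + y u + y v\<close>; constraint (i') says the same of
  their mean. For 0/1 values the mean lies in \<open>[0, 1]\<close> and is positive exactly when the maximum is 1,
  so the mean and the maximum lie below the same integers. The common neighbourhood of a pair in
  \<open>E2 V E - E\<close> is nonempty, so the division by its cardinality is a genuine mean.\<close>

lemma mean_le_int_iff_all_le:
  fixes z :: "'a \<Rightarrow> int" and k :: int
  assumes "finite N" and "N \<noteq> {}" and z01: "\<forall>i\<in>N. z i \<in> {0, 1}"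
  shows "(\<Sum>i\<in>N. real_of_int (z i)) / real (card N) \<le> real_of_int k \<longleftrightarrow> (\<forall>i\<in>N. z i \<le> k)"
proof -
  have card_pos: "real (card N) > 0"
    using assms by (simp add: card_gt_0_iff)
  show ?thesis
  proof
    assume mean_le: "(\<Sum>i\<in>N. real_of_int (z i)) / real (card N) \<le> real_of_int k"
    show "\<forall>i\<in>N. z i \<le> k"
    proof
      fix j assume "j \<in> N"
      have "real_of_int (z j) \<le> (\<Sum>i\<in>N. real_of_int (z i))"
        using \<open>j \<in> N\<close> z01 \<open>finite N\<close> by (intro member_le_sum) auto
      then have "z j > 0 \<Longrightarrow> (\<Sum>i\<in>N. real_of_int (z i)) / real (card N) > 0"
        using card_pos by simp
      moreover have "(\<Sum>i\<in>N. real_of_int (z i)) / real (card N) \<ge> 0"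
        using z01 card_pos by (intro divide_nonneg_pos sum_nonneg) auto
      ultimately show "z j \<le> k"
        using mean_le z01 \<open>j \<in> N\<close> by fastforce
    qed
  next
    assume "\<forall>i\<in>N. z i \<le> k"
    then have "(\<Sum>i\<in>N. real_of_int (z i)) \<le> real (card N) * real_of_int k"
      using sum_bounded_above[of N "\<lambda>i. real_of_int (z i)" "real_of_int k"] by simp
    then show "(\<Sum>i\<in>N. real_of_int (z i)) / real (card N) \<le> real_of_int k"
      using card_pos by (simp add: divide_le_eq mult.commute)
  qed
qed

lemma nbhd_subset: "nbhd V E v \<subseteq> V"
  unfolding nbhd_def by blast

lemma common_nbhd_nonempty:
  assumes "{u, v} \<in> E2 V E - E"
  shows "nbhd V E u \<inter> nbhd V E v \<noteq> {}"
proof -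
  obtain a c where "{u, v} = {a, c}" and "{a, c} \<in> E \<or> nbhd V E a \<inter> nbhd V E c \<noteq> {}"
    using assms unfolding E2_def by blast
  with assms show ?thesis
    by (auto simp: doubleton_eq_iff Int_commute)
qed

lemma con_i_iff_con_i':
  assumes "finite V" and y01: "\<forall>v\<in>V. y v \<in> {0, 1}"
  shows "con_i V E x y \<longleftrightarrow> con_i' V E x y"
proof -
  have "(\<forall>i \<in> nbhd V E u \<inter> nbhd V E v. 1 - y u - y v - y i \<le> x {u, v}) \<longleftrightarrow>
      (\<Sum>i \<in> nbhd V E u \<inter> nbhd V E v. real_of_int (1 - y i))
        / real (card (nbhd V E u \<inter> nbhd V E v)) - real_of_int (y u) - real_of_int (y v)
      \<le> real_of_int (x {u, v})" if "{u, v} \<in> E2 V E - E" for u v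
  proof -
    let ?N = "nbhd V E u \<inter> nbhd V E v"
    have "finite ?N"
      using \<open>finite V\<close> nbhd_subset by (meson finite_subset inf.coboundedI1)
    moreover have "\<forall>i\<in>?N. 1 - y i \<in> {0, 1}"
      using y01 nbhd_subset by fastforce
    ultimately show ?thesis
      using mean_le_int_iff_all_le[of ?N "\<lambda>i. 1 - y i" "x {u, v} + y u + y v"]
        common_nbhd_nonempty[OF that]
      by (simp add: algebra_simps)
  qed
  then show ?thesis
    unfolding con_i_def con_i'_def by blast
qed

theorem theorem1:
  fixes V :: "'a set" and E :: "'a set set" and b :: real
  assumes "simple_graph V E" and "b \<ge> 0"
  shows "F1 V E b = F2 V E b"
proof -
  have "finite V"
    using assms(1) unfolding simple_graph_def by blast
  then show ?thesis
    unfolding F1_def F2_def dom_ok_def using con_i_iff_con_i' by blast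
qed

end
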